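(* Suppose there exist an $(N_1,N_2,N_3)$-achievable $(n_1,n_2,n_3,k_1,k_2,T)_{\mathbb{F}}$ streaming code and an $(N_1,N_2,N_3)$-achievable $(n_1',n_2',n_3',k_1',k_2',T)_{\mathbb{F}}$ streaming code. Then for all nonnegative integers $A,B$ there exists an $(N_1,N_2,N_3)$-achievable $(An_1+Bn_1',\,An_2+Bn_2',\,An_3+Bn_3',\,Ak_1+Bk_1',\,Ak_2+Bk_2',\,T)_{\mathbb{F}}$ streaming code.
   Context: Network: two sources, one relay, one destination; no direct source–destination link. Source $i\in\{1,2\}$ has messages $s_{t,i}\in\mathbb{F}^{k_i}$, $t\ge0$, over a finite field $\mathbb{F}$. A time-invariant $(n_1,n_2,n_3,k_1,k_2,T)_{\mathbb{F}}$ streaming code (unbounded memory): source $i$ sends at time $t$ a packet $x^{(1)}_{t,i}\in\mathbb{F}^{n_i}$, a fixed function of $s_{0,i},\dots,s_{t,i}$; a relay function $g$, the same at every time $t$, takes the packets received from both sources at times $t-T,\dots,t$ together with the relay's previously produced estimates of past source messages, and outputs a packet $x^{(2)}_t\in\mathbb{F}^{n_3}$ and estimates of $s_{t-T,1},s_{t-T,2}$; the destination outputs at time $t+T$ estimates $\hat s_{t,i}$ from its received packets up to time $t+T$. Each link is a packet erasure channel (received packet is the sent one or the erasure symbol $*$). An $N$-erasure sequence has exactly $N$ erased times; link source $i\to$relay suffers an arbitrary $N_i$-erasure sequence, relay$\to$destination an arbitrary $N_3$-erasure sequence. The code is $(N_1,N_2,N_3)$-achievable if $\hat s_{t,i}=s_{t,i}$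 always. *)

theory Defs
  imports Main
begin

text \<open>Vectors over the field are lists; a received packet is None (erasure) or Some packet.\<close>

type_synonym 'f encoder = "'f list list \<Rightarrow> 'f list"
  \<comment> \<open>maps the message history s_0,...,s_t of a source to the packet sent at time t\<close>

type_synonym 'f relayfun =
  "'f list option list \<Rightarrow> 'f list option list \<Rightarrow> ('f list \<times> 'f list) list
     \<Rightarrow> 'f list \<times> 'f list \<times> 'f list"
  \<comment> \<open>(received window from source 1 at times t-T..t, same for source 2,
       previously produced estimates of (s_{tau,1}, s_{tau,2}) for tau = 0..t-T-1)
       \<mapsto> (relay packet, estimate of s_{t-T,1}, estimate of s_{t-T,2})\<close>

type_synonym 'f decoder = "'f list option list \<Rightarrow> 'f list \<times> 'f list"
  \<comment> \<open>received relay packets at times 0..t+T \<mapsto> estimates of (s_{t,1}, s_{t,2})\<close>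

type_synonym 'f scode = "'f encoder \<times> 'f encoder \<times> 'f relayfun \<times> 'f decoder"

definition erasure_seq :: "nat \<Rightarrow> (nat \<Rightarrow> bool) \<Rightarrow> bool" where
  "erasure_seq N e \<longleftrightarrow> finite {t. e t} \<and> card {t. e t} = N"

definition channel :: "(nat \<Rightarrow> bool) \<Rightarrow> (nat \<Rightarrow> 'a) \<Rightarrow> nat \<Rightarrow> 'a option" where
  "channel e x t = (if e t then None else Some (x t))"

text \<open>Received packets at times max(0,t-T),...,t.\<close>
definition window :: "nat \<Rightarrow> (nat \<Rightarrow> 'a option) \<Rightarrow> nat \<Rightarrow> 'a option list" where
  "window T y t = map y [t - T..<Suc t]"

text \<open>Relay outputs at times 0,...,t-1; at time t the relay is given the estimates it produced
  at times T,...,t-1 (i.e. of the messages at times 0,...,t-1-T).\<close>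
primrec relay_hist ::
  "nat \<Rightarrow> 'f relayfun \<Rightarrow> (nat \<Rightarrow> 'f list option list) \<Rightarrow> (nat \<Rightarrow> 'f list option list)
     \<Rightarrow> nat \<Rightarrow> ('f list \<times> 'f list \<times> 'f list) list" where
  "relay_hist T g w1 w2 0 = []"
| "relay_hist T g w1 w2 (Suc t) =
     relay_hist T g w1 w2 t @ [g (w1 t) (w2 t) (map snd (drop T (relay_hist T g w1 w2 t)))]"

definition src_packet :: "'f encoder \<Rightarrow> (nat \<Rightarrow> 'f list) \<Rightarrow> nat \<Rightarrow> 'f list" where
  "src_packet f s t = f (map s [0..<Suc t])"

definition relay_packet ::
  "nat \<Rightarrow> 'f scode \<Rightarrow> (nat \<Rightarrow> 'f list) \<Rightarrow> (nat \<Rightarrow> 'f list) \<Rightarrow> (nat \<Rightarrow> bool) \<Rightarrow> (nat \<Rightarrow> bool)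
     \<Rightarrow> nat \<Rightarrow> 'f list" where
  "relay_packet T C s1 s2 e1 e2 t =
     (case C of (f1, f2, g, d) \<Rightarrow>
        fst (relay_hist T g (window T (channel e1 (src_packet f1 s1)))
                            (window T (channel e2 (src_packet f2 s2))) (Suc t) ! t))"

definition dest_estimate ::
  "nat \<Rightarrow> 'f scode \<Rightarrow> (nat \<Rightarrow> 'f list) \<Rightarrow> (nat \<Rightarrow> 'f list) \<Rightarrow> (nat \<Rightarrow> bool) \<Rightarrow> (nat \<Rightarrow> bool)
     \<Rightarrow> (nat \<Rightarrow> bool) \<Rightarrow> nat \<Rightarrow> 'f list \<times> 'f list" where
  "dest_estimate T C s1 s2 e1 e2 e3 t =
     (case C of (f1, f2, g, d) \<Rightarrow>
        d (map (channel e3 (relay_packet T C s1 s2 e1 e2)) [0..<Suc (t + T)]))"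

definition rx_ok :: "nat \<Rightarrow> 'f list option \<Rightarrow> bool" where
  "rx_ok n y \<longleftrightarrow> (\<forall>x. y = Some x \<longrightarrow> length x = n)"

definition streaming_code ::
  "nat \<Rightarrow> nat \<Rightarrow> nat \<Rightarrow> nat \<Rightarrow> nat \<Rightarrow> nat \<Rightarrow> 'f scode \<Rightarrow> bool" where
  "streaming_code n1 n2 n3 k1 k2 T C \<longleftrightarrow>
     (case C of (f1, f2, g, d) \<Rightarrow>
        (\<forall>ss. (\<forall>s\<in>set ss. length s = k1) \<longrightarrow> length (f1 ss) = n1) \<and>
        (\<forall>ss. (\<forall>s\<in>set ss. length s = k2) \<longrightarrow> length (f2 ss) = n2) \<and>
        (\<forall>w1 w2 es. (\<forall>y\<in>set w1. rx_ok n1 y) \<and> (\<forall>y\<in>set w2. rx_ok n2 y) \<and>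
              (\<forall>(a, b)\<in>set es. length a = k1 \<and> length b = k2) \<longrightarrow>
           (case g w1 w2 es of (x, a, b) \<Rightarrow> length x = n3 \<and> length a = k1 \<and> length b = k2)) \<and>
        (\<forall>z. (\<forall>y\<in>set z. rx_ok n3 y) \<longrightarrow>
           (case d z of (a, b) \<Rightarrow> length a = k1 \<and> length b = k2)))"

definition achievable :: "nat \<Rightarrow> nat \<Rightarrow> nat \<Rightarrow> nat \<Rightarrow> nat \<Rightarrow> nat \<Rightarrow> 'f scode \<Rightarrow> bool" where
  "achievable N1 N2 N3 k1 k2 T C \<longleftrightarrow>
     (\<forall>s1 s2 e1 e2 e3.
        (\<forall>t. length (s1 t) = k1) \<longrightarrow> (\<forall>t. length (s2 t) = k2) \<longrightarrow>
        erasure_seq N1 e1 \<longrightarrow> erasure_seq N2 e2 \<longrightarrow> erasure_seq N3 e3 \<longrightarrow>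
        (\<forall>t. dest_estimate T C s1 s2 e1 e2 e3 t = (s1 t, s2 t)))"

end

theory Submission imports Defs begin

text \<open>Two codes with the same delay can be run side by side on the concatenation of their
  messages: every packet of the combined code is a packet of the first code followed by one of the
  second, so an erasure pattern hits both component codes at exactly the same times, and each
  component, reading its own coordinates, behaves as if it were used alone. Hence the rates add,
  the code with all dimensions zero is trivially achievable, and induction gives any nonnegative
  integer combination.\<close>

definition encoder_dims :: "nat \<Rightarrow> nat \<Rightarrow> 'f encoder \<Rightarrow> bool" where
  "encoder_dims k n f \<longleftrightarrow> (\<forall>ss. (\<forall>s\<in>set ss. length s = k) \<longrightarrow> length (f ss) = n)"

definition relay_dims :: "nat \<Rightarrow> nat \<Rightarrow> nat \<Rightarrow> nat \<Rightarrow> nat \<Rightarrow> 'f relayfun \<Rightarrow> bool" where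
  "relay_dims n1 n2 n3 k1 k2 g \<longleftrightarrow>
     (\<forall>w1 w2 es. (\<forall>y\<in>set w1. rx_ok n1 y) \<and> (\<forall>y\<in>set w2. rx_ok n2 y) \<and>
        (\<forall>(a, b)\<in>set es. length a = k1 \<and> length b = k2) \<longrightarrow>
        (case g w1 w2 es of (x, a, b) \<Rightarrow> length x = n3 \<and> length a = k1 \<and> length b = k2))"

definition decoder_dims :: "nat \<Rightarrow> nat \<Rightarrow> nat \<Rightarrow> 'f decoder \<Rightarrow> bool" where
  "decoder_dims n3 k1 k2 d \<longleftrightarrow>
     (\<forall>z. (\<forall>y\<in>set z. rx_ok n3 y) \<longrightarrow> (case d z of (a, b) \<Rightarrow> length a = k1 \<and> length b = k2))"

lemma streaming_code_iff:
  "streaming_code n1 n2 n3 k1 k2 T (f1, f2, g, d) \<longleftrightarrow>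
     encoder_dims k1 n1 f1 \<and> encoder_dims k2 n2 f2 \<and> relay_dims n1 n2 n3 k1 k2 g \<and>
     decoder_dims n3 k1 k2 d"
  by (simp add: streaming_code_def encoder_dims_def relay_dims_def decoder_dims_def)

lemma rx_ok_take: "rx_ok (n + n') y \<Longrightarrow> rx_ok n (map_option (take n) y)"
  by (auto simp: rx_ok_def)

lemma rx_ok_drop: "rx_ok (n + n') y \<Longrightarrow> rx_ok n' (map_option (drop n) y)"
  by (auto simp: rx_ok_def)

lemma rx_ok_window_channel:
  "(\<And>t. length (x t) = n) \<Longrightarrow> y \<in> set (window T (channel e x) t) \<Longrightarrow> rx_ok n y"
  by (auto simp: window_def channel_def rx_ok_def split: if_splits)

lemma channel_append:
  assumes "\<And>t. length (x t) = n"
  shows "map_option (take n) (channel e (\<lambda>t. x t @ y t) t) = channel e x t"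
    and "map_option (drop n) (channel e (\<lambda>t. x t @ y t) t) = channel e y t"
  by (simp_all add: channel_def assms)

fun append3 :: "'a list \<times> 'a list \<times> 'a list \<Rightarrow> 'a list \<times> 'a list \<times> 'a list \<Rightarrow> 'a list \<times> 'a list \<times> 'a list" where
  "append3 (x, a, b) (x', a', b') = (x @ x', a @ a', b @ b')"

definition concat_encoder :: "nat \<Rightarrow> 'f encoder \<Rightarrow> 'f encoder \<Rightarrow> 'f encoder" where
  "concat_encoder k f f' ss = f (map (take k) ss) @ f' (map (drop k) ss)"

text \<open>The relay also splits its own past estimates at k1 and k2; this is faithful because the
  estimates of the first code have exactly these lengths.\<close>

definition concat_relay :: "nat \<Rightarrow> nat \<Rightarrow> nat \<Rightarrow> nat \<Rightarrow> 'f relayfun \<Rightarrow> 'f relayfun \<Rightarrow> 'f relayfun" where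
  "concat_relay n1 n2 k1 k2 g g' w1 w2 es = append3
     (g (map (map_option (take n1)) w1) (map (map_option (take n2)) w2) (map (map_prod (take k1) (take k2)) es))
     (g' (map (map_option (drop n1)) w1) (map (map_option (drop n2)) w2) (map (map_prod (drop k1) (drop k2)) es))"

definition concat_decoder :: "nat \<Rightarrow> 'f decoder \<Rightarrow> 'f decoder \<Rightarrow> 'f decoder" where
  "concat_decoder n3 d d' z =
     (let (a, b) = d (map (map_option (take n3)) z); (a', b') = d' (map (map_option (drop n3)) z)
      in (a @ a', b @ b'))"

fun concat_code :: "nat \<Rightarrow> nat \<Rightarrow> nat \<Rightarrow> nat \<Rightarrow> nat \<Rightarrow> 'f scode \<Rightarrow> 'f scode \<Rightarrow> 'f scode" where
  "concat_code n1 n2 n3 k1 k2 (f1, f2, g, d) (f1', f2', g', d') =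
     (concat_encoder k1 f1 f1', concat_encoder k2 f2 f2', concat_relay n1 n2 k1 k2 g g',
      concat_decoder n3 d d')"

lemma fst_append3 [simp]: "fst (append3 p q) = fst p @ fst q"
  by (cases p; cases q) simp

lemma encoder_dims_concat:
  "encoder_dims k n f \<Longrightarrow> encoder_dims k' n' f' \<Longrightarrow> encoder_dims (k + k') (n + n') (concat_encoder k f f')"
  by (simp add: encoder_dims_def concat_encoder_def)

lemma relay_dimsD:
  assumes "relay_dims n1 n2 n3 k1 k2 g" and "g w1 w2 es = (x, a, b)"
    and "\<forall>y\<in>set w1. rx_ok n1 y" "\<forall>y\<in>set w2. rx_ok n2 y" "\<forall>(u, v)\<in>set es. length u = k1 \<and> length v = k2"
  shows "length x = n3 \<and> length a = k1 \<and> length b = k2"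
  using assms(1)[unfolded relay_dims_def, rule_format, of w1 w2 es] assms(2-) by simp

lemma relay_dims_concat:
  fixes g g' :: "'f relayfun"
  assumes "relay_dims n1 n2 n3 k1 k2 g" and "relay_dims n1' n2' n3' k1' k2' g'"
  shows "relay_dims (n1 + n1') (n2 + n2') (n3 + n3') (k1 + k1') (k2 + k2') (concat_relay n1 n2 k1 k2 g g')"
  unfolding relay_dims_def
proof (intro allI impI, elim conjE)
  fix w1 w2 :: "'f list option list" and es :: "('f list \<times> 'f list) list"
  assume rx1: "\<forall>y\<in>set w1. rx_ok (n1 + n1') y" and rx2: "\<forall>y\<in>set w2. rx_ok (n2 + n2') y"
    and "\<forall>(u, v)\<in>set es. length u = k1 + k1' \<and> length v = k2 + k2'"
  then have es: "length u = k1 + k1' \<and> length v = k2 + k2'" if "(u, v) \<in> set es" for u v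
    using that by blast
  obtain x a b where xab: "g (map (map_option (take n1)) w1) (map (map_option (take n2)) w2)
      (map (map_prod (take k1) (take k2)) es) = (x, a, b)"
    by (metis prod_cases3)
  obtain x' a' b' where xab': "g' (map (map_option (drop n1)) w1) (map (map_option (drop n2)) w2)
      (map (map_prod (drop k1) (drop k2)) es) = (x', a', b')"
    by (metis prod_cases3)
  have "length x = n3 \<and> length a = k1 \<and> length b = k2"
    by (rule relay_dimsD[OF assms(1) xab]) (use rx1 rx2 es in \<open>auto intro: rx_ok_take\<close>)
  moreover have "length x' = n3' \<and> length a' = k1' \<and> length b' = k2'"
    by (rule relay_dimsD[OF assms(2) xab']) (use rx1 rx2 es in \<open>auto intro: rx_ok_drop\<close>)
  ultimately show "case concat_relay n1 n2 k1 k2 g g' w1 w2 es of (x, a, b) \<Rightarrow>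
      length x = n3 + n3' \<and> length a = k1 + k1' \<and> length b = k2 + k2'"
    by (simp add: concat_relay_def xab xab')
qed

lemma decoder_dims_concat:
  fixes d d' :: "'f decoder"
  assumes "decoder_dims n3 k1 k2 d" and "decoder_dims n3' k1' k2' d'"
  shows "decoder_dims (n3 + n3') (k1 + k1') (k2 + k2') (concat_decoder n3 d d')"
  unfolding decoder_dims_def
proof (intro allI impI)
  fix z :: "'f list option list" assume rx: "\<forall>y\<in>set z. rx_ok (n3 + n3') y"
  obtain a b where ab: "d (map (map_option (take n3)) z) = (a, b)"
    by fastforce
  obtain a' b' where ab': "d' (map (map_option (drop n3)) z) = (a', b')"
    by fastforce
  have "length a = k1 \<and> length b = k2"
    using assms(1)[unfolded decoder_dims_def, rule_format, of "map (map_option (take n3)) z"] rx ab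
    by (auto intro: rx_ok_take)
  moreover have "length a' = k1' \<and> length b' = k2'"
    using assms(2)[unfolded decoder_dims_def, rule_format, of "map (map_option (drop n3)) z"] rx ab'
    by (auto intro: rx_ok_drop)
  ultimately show "case concat_decoder n3 d d' z of (a, b) \<Rightarrow> length a = k1 + k1' \<and> length b = k2 + k2'"
    by (simp add: concat_decoder_def ab ab')
qed

lemma streaming_code_concat:
  assumes "streaming_code n1 n2 n3 k1 k2 T C" and "streaming_code n1' n2' n3' k1' k2' T C'"
  shows "streaming_code (n1 + n1') (n2 + n2') (n3 + n3') (k1 + k1') (k2 + k2') T
           (concat_code n1 n2 n3 k1 k2 C C')"
  using assms
  by (cases C; cases C')
     (simp add: streaming_code_iff encoder_dims_concat relay_dims_concat decoder_dims_concat)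

lemma relay_hist_length [simp]: "length (relay_hist T g w1 w2 t) = t"
  by (induction t) auto

lemma relay_hist_dims:
  assumes "(x, a, b) \<in> set (relay_hist T g w1 w2 t)" and g: "relay_dims n1 n2 n3 k1 k2 g"
    and rx1: "\<And>t y. y \<in> set (w1 t) \<Longrightarrow> rx_ok n1 y" and rx2: "\<And>t y. y \<in> set (w2 t) \<Longrightarrow> rx_ok n2 y"
  shows "length x = n3 \<and> length a = k1 \<and> length b = k2"
  using assms(1)
proof (induction t arbitrary: x a b)
  case (Suc t)
  let ?es = "map snd (drop T (relay_hist T g w1 w2 t))"
  have es: "\<forall>(u, v)\<in>set ?es. length u = k1 \<and> length v = k2"
    using Suc.IH by (auto dest!: in_set_dropD)
  obtain x' a' b' where new: "g (w1 t) (w2 t) ?es = (x', a', b')"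
    by (metis prod_cases3)
  have "length x' = n3 \<and> length a' = k1 \<and> length b' = k2"
    using relay_dimsD[OF g new] rx1 rx2 es by blast
  with Suc new show ?case
    by auto
qed simp

lemma estimates_map2_append3:
  assumes "length H = length H'" and "\<forall>(x, a, b)\<in>set H. length a = k1 \<and> length b = k2"
  shows "map (map_prod (take k1) (take k2)) (map snd (map2 append3 H H')) = map snd H"
    and "map (map_prod (drop k1) (drop k2)) (map snd (map2 append3 H H')) = map snd H'"
  using assms by (induction H H' rule: list_induct2) (auto split: prod.splits)

lemma relay_hist_concat:
  assumes g: "relay_dims n1 n2 n3 k1 k2 g"
    and rx1: "\<And>t y. y \<in> set (w1 t) \<Longrightarrow> rx_ok n1 y" and rx2: "\<And>t y. y \<in> set (w2 t) \<Longrightarrow> rx_ok n2 y"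
    and "\<And>t. map (map_option (take n1)) (v1 t) = w1 t" "\<And>t. map (map_option (drop n1)) (v1 t) = w1' t"
    and "\<And>t. map (map_option (take n2)) (v2 t) = w2 t" "\<And>t. map (map_option (drop n2)) (v2 t) = w2' t"
  shows "relay_hist T (concat_relay n1 n2 k1 k2 g g') v1 v2 t =
           map2 append3 (relay_hist T g w1 w2 t) (relay_hist T g' w1' w2' t)"
proof (induction t)
  case (Suc t)
  let ?H = "relay_hist T g w1 w2 t" and ?H' = "relay_hist T g' w1' w2' t"
  have len: "length (drop T ?H) = length (drop T ?H')"
    by simp
  have "length x = n3 \<and> length a = k1 \<and> length b = k2" if "(x, a, b) \<in> set ?H" for x a b
    by (rule relay_hist_dims[OF that g]) (auto intro: rx1 rx2)
  then have "\<forall>(x, a, b)\<in>set (drop T ?H). length a = k1 \<and> length b = k2"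
    by (auto dest: in_set_dropD)
  note estimates = estimates_map2_append3[OF len this]
  show ?case
    using Suc.IH assms estimates by (simp add: concat_relay_def drop_map drop_zip)
qed simp

lemma src_packet_length: "encoder_dims k n f \<Longrightarrow> (\<And>t. length (s t) = k) \<Longrightarrow> length (src_packet f s t) = n"
  by (simp add: encoder_dims_def src_packet_def)

lemma src_packet_concat:
  assumes "\<And>t. length (s t) = k"
  shows "src_packet (concat_encoder k f f') (\<lambda>t. s t @ s' t) = (\<lambda>t. src_packet f s t @ src_packet f' s' t)"
  by (simp add: fun_eq_iff src_packet_def concat_encoder_def comp_def assms)

lemma relay_packet_length:
  assumes "streaming_code n1 n2 n3 k1 k2 T C" and "\<And>t. length (s1 t) = k1" "\<And>t. length (s2 t) = k2"
  shows "length (relay_packet T C s1 s2 e1 e2 t) = n3"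
proof -
  obtain f1 f2 g d where C: "C = (f1, f2, g, d)"
    by (cases C)
  with assms(1) have "encoder_dims k1 n1 f1" "encoder_dims k2 n2 f2" "relay_dims n1 n2 n3 k1 k2 g"
    by (simp_all add: streaming_code_iff)
  let ?H = "relay_hist T g (window T (channel e1 (src_packet f1 s1))) (window T (channel e2 (src_packet f2 s2))) (Suc t)"
  obtain x a b where xab: "?H ! t = (x, a, b)"
    by (metis prod_cases3)
  then have "(x, a, b) \<in> set ?H"
    by (metis lessI nth_mem relay_hist_length)
  then have "length x = n3"
    by (rule relay_hist_dims[OF _ \<open>relay_dims n1 n2 n3 k1 k2 g\<close>, THEN conjunct1])
       (auto intro: rx_ok_window_channel src_packet_length \<open>encoder_dims k1 n1 f1\<close> \<open>encoder_dims k2 n2 f2\<close> assms(2,3))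
  then show ?thesis
    by (simp add: C relay_packet_def xab del: relay_hist.simps)
qed

lemma relay_packet_concat:
  assumes "streaming_code n1 n2 n3 k1 k2 T C" and "\<And>t. length (s1 t) = k1" "\<And>t. length (s2 t) = k2"
  shows "relay_packet T (concat_code n1 n2 n3 k1 k2 C C') (\<lambda>t. s1 t @ s1' t) (\<lambda>t. s2 t @ s2' t) e1 e2 t =
           relay_packet T C s1 s2 e1 e2 t @ relay_packet T C' s1' s2' e1 e2 t"
proof -
  obtain f1 f2 g d where C: "C = (f1, f2, g, d)"
    by (cases C)
  obtain f1' f2' g' d' where C': "C' = (f1', f2', g', d')"
    by (cases C')
  from assms(1) have "encoder_dims k1 n1 f1" "encoder_dims k2 n2 f2" and g: "relay_dims n1 n2 n3 k1 k2 g"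
    by (simp_all add: C streaming_code_iff)
  with assms(2,3) have p1: "\<And>t. length (src_packet f1 s1 t) = n1" and p2: "\<And>t. length (src_packet f2 s2 t) = n2"
    by (simp_all add: src_packet_length)
  have "relay_hist T (concat_relay n1 n2 k1 k2 g g')
          (window T (channel e1 (\<lambda>t. src_packet f1 s1 t @ src_packet f1' s1' t)))
          (window T (channel e2 (\<lambda>t. src_packet f2 s2 t @ src_packet f2' s2' t))) (Suc t) =
        map2 append3
          (relay_hist T g (window T (channel e1 (src_packet f1 s1))) (window T (channel e2 (src_packet f2 s2))) (Suc t))
          (relay_hist T g' (window T (channel e1 (src_packet f1' s1'))) (window T (channel e2 (src_packet f2' s2'))) (Suc t))"
    by (rule relay_hist_concat[OF g])
       (auto intro: rx_ok_window_channel p1 p2 simp: window_def channel_append[OF p1] channel_append[OF p2])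
  then show ?thesis
    by (simp add: C C' relay_packet_def src_packet_concat assms(2,3) del: relay_hist.simps)
qed

lemma dest_estimate_concat:
  assumes "streaming_code n1 n2 n3 k1 k2 T C" and "\<And>t. length (s1 t) = k1" "\<And>t. length (s2 t) = k2"
  shows "dest_estimate T (concat_code n1 n2 n3 k1 k2 C C') (\<lambda>t. s1 t @ s1' t) (\<lambda>t. s2 t @ s2' t) e1 e2 e3 t =
           (let D = dest_estimate T C s1 s2 e1 e2 e3 t; D' = dest_estimate T C' s1' s2' e1 e2 e3 t
            in (fst D @ fst D', snd D @ snd D'))"
proof -
  obtain f1 f2 g d where C: "C = (f1, f2, g, d)"
    by (cases C)
  obtain f1' f2' g' d' where C': "C' = (f1', f2', g', d')"
    by (cases C')
  have R: "relay_packet T (concat_code n1 n2 n3 k1 k2 C C') (\<lambda>t. s1 t @ s1' t) (\<lambda>t. s2 t @ s2' t) e1 e2 =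
          (\<lambda>t. relay_packet T C s1 s2 e1 e2 t @ relay_packet T C' s1' s2' e1 e2 t)"
    by (intro ext relay_packet_concat assms)
  have "\<And>t. length (relay_packet T C s1 s2 e1 e2 t) = n3"
    by (rule relay_packet_length[OF assms(1)]) (simp_all add: assms(2,3))
  note split = channel_append[OF this[unfolded C]]
  show ?thesis
    unfolding dest_estimate_def R
    by (simp add: C C' concat_decoder_def split comp_def split_beta Let_def del: upt_Suc)
qed

lemma achievable_concat:
  fixes C C' :: "'f scode"
  assumes "streaming_code n1 n2 n3 k1 k2 T C" "achievable N1 N2 N3 k1 k2 T C"
    and "achievable N1 N2 N3 k1' k2' T C'"
  shows "achievable N1 N2 N3 (k1 + k1') (k2 + k2') T (concat_code n1 n2 n3 k1 k2 C C')"
  unfolding achievable_def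
proof (intro allI impI)
  fix s1 s2 :: "nat \<Rightarrow> 'f list" and e1 e2 e3 :: "nat \<Rightarrow> bool" and t :: nat
  assume l1: "\<forall>t. length (s1 t) = k1 + k1'" and l2: "\<forall>t. length (s2 t) = k2 + k2'"
    and "erasure_seq N1 e1" "erasure_seq N2 e2" "erasure_seq N3 e3"
  with assms(2,3) have "dest_estimate T C (\<lambda>t. take k1 (s1 t)) (\<lambda>t. take k2 (s2 t)) e1 e2 e3 t =
                          (take k1 (s1 t), take k2 (s2 t))"
    and "dest_estimate T C' (\<lambda>t. drop k1 (s1 t)) (\<lambda>t. drop k2 (s2 t)) e1 e2 e3 t =
                          (drop k1 (s1 t), drop k2 (s2 t))"
    by (simp_all add: achievable_def)
  moreover have "dest_estimate T (concat_code n1 n2 n3 k1 k2 C C')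
      (\<lambda>t. take k1 (s1 t) @ drop k1 (s1 t)) (\<lambda>t. take k2 (s2 t) @ drop k2 (s2 t)) e1 e2 e3 t =
      (let D = dest_estimate T C (\<lambda>t. take k1 (s1 t)) (\<lambda>t. take k2 (s2 t)) e1 e2 e3 t;
           D' = dest_estimate T C' (\<lambda>t. drop k1 (s1 t)) (\<lambda>t. drop k2 (s2 t)) e1 e2 e3 t
       in (fst D @ fst D', snd D @ snd D'))"
    by (rule dest_estimate_concat[OF assms(1)]) (simp_all add: l1 l2)
  ultimately show "dest_estimate T (concat_code n1 n2 n3 k1 k2 C C') s1 s2 e1 e2 e3 t = (s1 t, s2 t)"
    by simp
qed

definition zero_code :: "'f scode" where
  "zero_code = (\<lambda>_. [], \<lambda>_. [], \<lambda>_ _ _. ([], [], []), \<lambda>_. ([], []))"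

lemma streaming_code_zero: "streaming_code 0 0 0 0 0 T zero_code"
  by (simp add: zero_code_def streaming_code_def)

lemma achievable_zero: "achievable N1 N2 N3 0 0 T zero_code"
  by (simp add: zero_code_def achievable_def dest_estimate_def)

lemma achievable_code_scale:
  fixes C :: "'f scode"
  assumes "streaming_code n1 n2 n3 k1 k2 T C" and "achievable N1 N2 N3 k1 k2 T C"
  shows "\<exists>C' :: 'f scode. streaming_code (A * n1) (A * n2) (A * n3) (A * k1) (A * k2) T C' \<and>
           achievable N1 N2 N3 (A * k1) (A * k2) T C'"
proof (induction A)
  case 0
  show ?case
    using streaming_code_zero achievable_zero by (metis mult_0)
next
  case (Suc A)
  then obtain C' :: "'f scode" where
    sc: "streaming_code (A * n1) (A * n2) (A * n3) (A * k1) (A * k2) T C'" and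
    ac: "achievable N1 N2 N3 (A * k1) (A * k2) T C'"
    by blast
  show ?case
    using streaming_code_concat[OF assms(1) sc] achievable_concat[OF assms ac] unfolding mult_Suc by blast
qed

theorem lemma6:
  fixes C :: "'f::{field,finite} scode" and C' :: "'f scode"
    and n1 n2 n3 k1 k2 n1' n2' n3' k1' k2' T N1 N2 N3 A B :: nat
  assumes "streaming_code n1 n2 n3 k1 k2 T C" "achievable N1 N2 N3 k1 k2 T C"
    and "streaming_code n1' n2' n3' k1' k2' T C'" "achievable N1 N2 N3 k1' k2' T C'"
  shows "\<exists>C'' :: 'f scode.
           streaming_code (A*n1 + B*n1') (A*n2 + B*n2') (A*n3 + B*n3') (A*k1 + B*k1') (A*k2 + B*k2') T C''
         \<and> achievable N1 N2 N3 (A*k1 + B*k1') (A*k2 + B*k2') T C''"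
proof -
  obtain CA :: "'f scode" where
    scA: "streaming_code (A * n1) (A * n2) (A * n3) (A * k1) (A * k2) T CA" and
    acA: "achievable N1 N2 N3 (A * k1) (A * k2) T CA"
    using achievable_code_scale[OF assms(1,2)] by blast
  obtain CB :: "'f scode" where
    scB: "streaming_code (B * n1') (B * n2') (B * n3') (B * k1') (B * k2') T CB" and
    acB: "achievable N1 N2 N3 (B * k1') (B * k2') T CB"
    using achievable_code_scale[OF assms(3,4)] by blast
  show ?thesis
    using streaming_code_concat[OF scA scB] achievable_concat[OF scA acA acB] by blast
qed

end
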